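(* There exists a nonnegative sequence $\{\lambda_n\}_{n=1}^\infty\in\mathrm{GBV}$ with $\{\lambda_n\}\notin R_0^+\mathrm{BV}$ such that $$\sum_{n=1}^\infty n^{p+p\gamma-2}\lambda_n^p<\infty$$ for every $1<p<\infty$ and every $\gamma$ with $1/p-1<\gamma<1/p$.
   Context: $\Delta c_n:=c_n-c_{n+1}$. A sequence $\mathbf c=\{c_n\}_{n=1}^\infty$ belongs to the class $\mathrm{GBV}$ if $c_n\ge 0$ for all $n$, $c_n\to 0$ as $n\to\infty$, and there is a positive constant $M(\mathbf c)$ depending only on $\mathbf c$ such that $\sum_{n=m}^{2m}|\Delta c_n|\le M(\mathbf c)\,c_m$ for all $m=1,2,\dots$. A nonnegative sequence $\mathbf b=\{b_n\}$ with $b_n\to0$ belongs to $R_0^+\mathrm{BV}$ ("rest bounded variation") if there is a constant $M(\mathbf b)$ depending only on $\mathbf b$ such that $\sum_{n=m}^\infty|b_n-b_{n+1}|\le M(\mathbf b)\,b_m$ for all $m=1,2,\dots$. *)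

theory Defs
  imports "HOL-Analysis.Analysis"
begin

text \<open>Sequences are indexed from 1; the value at index 0 is irrelevant.\<close>

definition GBV :: "(nat \<Rightarrow> real) \<Rightarrow> bool" where
  "GBV c \<longleftrightarrow> (\<forall>n\<ge>1. c n \<ge> 0) \<and> (\<lambda>n. c n) \<longlonglongrightarrow> 0 \<and>
     (\<exists>M>0. \<forall>m\<ge>1. (\<Sum>n=m..2*m. \<bar>c n - c (Suc n)\<bar>) \<le> M * c m)"

definition R0BV :: "(nat \<Rightarrow> real) \<Rightarrow> bool" where
  "R0BV b \<longleftrightarrow> (\<forall>n\<ge>1. b n \<ge> 0) \<and> b \<longlonglongrightarrow> 0 \<and>
     (\<exists>M. \<forall>m\<ge>1. summable (\<lambda>k. \<bar>b (k + m) - b (Suc (k + m))\<bar>) \<and>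
                 (\<Sum>k. \<bar>b (k + m) - b (Suc (k + m))\<bar>) \<le> M * b m)"

end

theory Submission
  imports Defs "HOL-Library.Discrete_Functions"
begin

(* The witness dip_seq equals 2^-(2^(i+1)) on the superblock [2^2^i, 2^2^(i+1)), except that it
   is halved at each power of two in that range.  It is decreasing up to a factor 2 and changes
   value at most three times on any [m, 2m], so its variation there is O(dip_seq m): it is in GBV.
   On a whole superblock, however, the 2^i - 1 dips add up to a variation of (2^i - 1) times the
   value at its start, so it is not in R_0^+BV.  Finally dip_seq n <= 2/n, and the weighted series
   converges as soon as p * gamma < 1. *)

lemma GBV_if_few_jumps:
  fixes c :: "nat \<Rightarrow> real" and K :: nat
  assumes nonneg: "\<And>n. 1 \<le> n \<Longrightarrow> 0 \<le> c n" and lim: "c \<longlonglongrightarrow> 0"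
    and jumps: "\<And>m. 1 \<le> m \<Longrightarrow> card {n \<in> {m..2*m}. c n \<noteq> c (Suc n)} \<le> K"
    and quasi_mono: "\<And>m n. 1 \<le> m \<Longrightarrow> m \<le> n \<Longrightarrow> n \<le> Suc (2*m) \<Longrightarrow> c n \<le> A * c m"
  shows "GBV c"
  unfolding GBV_def
proof (intro conjI exI[of _ "K * \<bar>A\<bar> + 1"] allI impI)
  fix m :: nat assume m: "1 \<le> m"
  define J where "J = {n \<in> {m..2*m}. c n \<noteq> c (Suc n)}"
  have "A * c m \<le> \<bar>A\<bar> * c m"
    using nonneg[OF m] by (intro mult_right_mono) auto
  then have step_le: "\<bar>c n - c (Suc n)\<bar> \<le> \<bar>A\<bar> * c m" if "n \<in> {m..2*m}" for n
    using that m nonneg[of n] nonneg[of "Suc n"] quasi_mono[of m n] quasi_mono[of m "Suc n"]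
    by (auto simp: abs_le_iff)
  have "(\<Sum>n=m..2*m. \<bar>c n - c (Suc n)\<bar>) = (\<Sum>n\<in>J. \<bar>c n - c (Suc n)\<bar>)"
    unfolding J_def by (rule sum.mono_neutral_right) auto
  also have "\<dots> \<le> (\<Sum>n\<in>J. \<bar>A\<bar> * c m)"
    by (rule sum_mono) (use step_le in \<open>auto simp: J_def\<close>)
  also have "\<dots> \<le> K * (\<bar>A\<bar> * c m)"
    using jumps[OF m] nonneg[OF m] unfolding J_def by (auto intro: mult_right_mono)
  also have "\<dots> \<le> (K * \<bar>A\<bar> + 1) * c m"
    using nonneg[OF m] by (simp add: algebra_simps)
  finally show "(\<Sum>n=m..2*m. \<bar>c n - c (Suc n)\<bar>) \<le> (K * \<bar>A\<bar> + 1) * c m" .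
qed (use nonneg lim in \<open>auto simp: add_nonneg_pos\<close>)

lemma R0BV_partial_variation_le:
  fixes b :: "nat \<Rightarrow> real"
  assumes "R0BV b"
  obtains M where "\<And>m N. 1 \<le> m \<Longrightarrow> (\<Sum>n=m..<N. \<bar>b n - b (Suc n)\<bar>) \<le> M * b m"
proof -
  let ?v = "\<lambda>n. \<bar>b n - b (Suc n)\<bar>"
  obtain M where M: "\<And>m. 1 \<le> m \<Longrightarrow>
      summable (\<lambda>k. ?v (k + m)) \<and> (\<Sum>k. ?v (k + m)) \<le> M * b m"
    using assms unfolding R0BV_def by blast
  have "(\<Sum>n=m..<N. ?v n) \<le> M * b m" if m: "1 \<le> m" for m N
  proof -
    have "(\<Sum>n=m..<N. ?v n) = (\<Sum>k<N - m. ?v (k + m))"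
      using sum.shift_bounds_nat_ivl[of ?v 0 m "N - m"]
      by (cases "m \<le> N") (auto simp: atLeast0LessThan)
    also have "\<dots> \<le> (\<Sum>k. ?v (k + m))"
      using M[OF m] by (intro sum_le_suminf) auto
    also have "\<dots> \<le> M * b m"
      using M[OF m] by blast
    finally show ?thesis .
  qed
  with that show ?thesis by blast
qed

lemma not_R0BV_if_unbounded_variation:
  fixes b :: "nat \<Rightarrow> real"
  assumes "\<And>B. \<exists>m N. 1 \<le> m \<and> 0 < b m \<and> B * b m \<le> (\<Sum>n=m..<N. \<bar>b n - b (Suc n)\<bar>)"
  shows "\<not> R0BV b"
proof
  assume "R0BV b"
  then obtain M where M: "\<And>m N. 1 \<le> m \<Longrightarrow> (\<Sum>n=m..<N. \<bar>b n - b (Suc n)\<bar>) \<le> M * b m"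
    by (metis R0BV_partial_variation_le)
  obtain m N where "1 \<le> m" "0 < b m" "(M + 1) * b m \<le> (\<Sum>n=m..<N. \<bar>b n - b (Suc n)\<bar>)"
    using assms by blast
  with M[of m N] show False
    by (simp add: algebra_simps)
qed

lemma summable_weighted_powr_if_le_const_over_n:
  fixes c :: "nat \<Rightarrow> real"
  assumes nonneg: "\<And>n. 1 \<le> n \<Longrightarrow> 0 \<le> c n"
    and bound: "\<And>n. 1 \<le> n \<Longrightarrow> c n \<le> C / real n"
    and p: "0 < p" and e: "e < p - 1"
  shows "summable (\<lambda>n. real (Suc n) powr e * c (Suc n) powr p)"
proof (rule summable_comparison_test')
  have "summable (\<lambda>n. real n powr (e - p))"
    using e by (simp add: summable_real_powr_iff)
  then show "summable (\<lambda>n. C powr p * real (Suc n) powr (e - p))"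
    by (intro summable_mult) (subst summable_Suc_iff[where f = "\<lambda>n. real n powr (e - p)"])
  have C: "0 \<le> C"
    using nonneg[of 1] bound[of 1] by simp
  fix n :: nat
  let ?x = "real (Suc n)"
  have "c (Suc n) powr p \<le> (C / ?x) powr p"
    using nonneg[of "Suc n"] bound[of "Suc n"] p by (intro powr_mono2) auto
  also have "\<dots> = C powr p / ?x powr p"
    using C by (simp add: powr_divide)
  finally have "?x powr e * c (Suc n) powr p \<le> ?x powr e * (C powr p / ?x powr p)"
    by (intro mult_left_mono) auto
  also have "\<dots> = C powr p * ?x powr (e - p)"
    by (simp add: powr_diff)
  finally show "norm (?x powr e * c (Suc n) powr p) \<le> C powr p * ?x powr (e - p)"
    by simp
qed

definition dyadic_level :: "nat \<Rightarrow> real" where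
  "dyadic_level L = (1/2) ^ (2 * 2 ^ floor_log L)"

definition dip_seq :: "nat \<Rightarrow> real" where
  "dip_seq n = (if \<exists>k. n = 2 ^ k then 1/2 else 1) * dyadic_level (floor_log n)"

lemma dyadic_level_pos: "0 < dyadic_level L"
  unfolding dyadic_level_def by simp

lemma dyadic_level_antimono: "L \<le> L' \<Longrightarrow> dyadic_level L' \<le> dyadic_level L"
  unfolding dyadic_level_def by (rule power_decreasing) (auto intro: floor_log_le_iff)

lemma dyadic_level_le: "dyadic_level L \<le> (1/2) ^ L"
  unfolding dyadic_level_def by (rule power_decreasing) (auto simp: floor_log_exp2_ge)

lemma dyadic_level_eq:
  assumes "2 ^ i \<le> L" "L < 2 * 2 ^ i"
  shows "dyadic_level L = dyadic_level (2 ^ i)"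
  using assms floor_log_eqI[of L i] by (simp add: dyadic_level_def)

lemma dip_seq_pos: "0 < dip_seq n"
  unfolding dip_seq_def using dyadic_level_pos by simp

lemma dip_seq_le_level: "dip_seq n \<le> dyadic_level (floor_log n)"
  unfolding dip_seq_def using dyadic_level_pos by simp

lemma dyadic_level_le_twice_dip_seq: "dyadic_level (floor_log n) \<le> 2 * dip_seq n"
  unfolding dip_seq_def using dyadic_level_pos by simp

lemma dip_seq_power2: "dip_seq (2 ^ L) = dyadic_level L / 2"
  unfolding dip_seq_def by auto

lemma dip_seq_power2_minus_1:
  assumes "1 \<le> L"
  shows "dip_seq (2 ^ Suc L - 1) = dyadic_level L"
proof -
  have below: "2 ^ L < (2::nat) ^ Suc L - 1" and above: "(2::nat) ^ Suc L - 1 < 2 ^ Suc L"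
    using assms one_less_power[of "2::nat" L] by simp_all
  have "\<not> (\<exists>k. (2::nat) ^ Suc L - 1 = 2 ^ k)"
  proof
    assume "\<exists>k. (2::nat) ^ Suc L - 1 = 2 ^ k"
    then obtain k where "(2::nat) ^ Suc L - 1 = 2 ^ k" ..
    then have "L < k" "k < Suc L"
      using below above by (simp_all del: power_Suc)
    then show False by simp
  qed
  moreover have "floor_log (2 ^ Suc L - 1) = L"
    using below above by (intro floor_log_eqI) auto
  ultimately show ?thesis
    unfolding dip_seq_def by simp
qed

lemma dip_seq_le_const_over_n:
  assumes "1 \<le> n"
  shows "dip_seq n \<le> 2 / real n"
proof -
  let ?L = "floor_log n"
  have "real n < 2 * 2 ^ ?L"
    using floor_log_exp2_gt[of n] by (metis of_nat_less_iff of_nat_numeral of_nat_mult of_nat_power)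
  have "dip_seq n \<le> (1/2) ^ ?L"
    using dip_seq_le_level dyadic_level_le order_trans by blast
  also have "\<dots> = 2 / (2 * 2 ^ ?L)"
    by (simp add: power_one_over)
  also have "\<dots> \<le> 2 / real n"
    using \<open>real n < 2 * 2 ^ ?L\<close> assms by (intro divide_left_mono) auto
  finally show ?thesis .
qed

lemma dip_seq_quasi_antimono: "m \<le> n \<Longrightarrow> dip_seq n \<le> 2 * dip_seq m"
  using dip_seq_le_level[of n] dyadic_level_antimono[OF floor_log_le_iff]
    dyadic_level_le_twice_dip_seq[of m] by (meson order_trans)

lemma dip_seq_Suc_eq:
  assumes "\<not> (\<exists>k. n = 2 ^ k)" "\<not> (\<exists>k. Suc n = 2 ^ k)"
  shows "dip_seq (Suc n) = dip_seq n"
proof -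
  have "n > 0"
    using assms(2) by (metis One_nat_def neq0_conv power_0)
  then have "2 ^ floor_log n \<le> n" "n < 2 * 2 ^ floor_log n"
    using floor_log_exp2_le floor_log_exp2_gt by auto
  moreover have "Suc n \<noteq> 2 * 2 ^ floor_log n"
    using assms(2) by (metis power_Suc)
  ultimately have "floor_log (Suc n) = floor_log n"
    by (intro floor_log_eqI) auto
  then show ?thesis
    unfolding dip_seq_def using assms by simp
qed

lemma dip_seq_jumps_card:
  assumes "1 \<le> m"
  shows "card {n \<in> {m..2*m}. dip_seq n \<noteq> dip_seq (Suc n)} \<le> 3"
proof -
  let ?k = "floor_log m"
  have m_lower: "2 ^ ?k \<le> m" and m_upper: "m < 2 * 2 ^ ?k"
    using assms floor_log_exp2_le floor_log_exp2_gt by auto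
  have "{n \<in> {m..2*m}. dip_seq n \<noteq> dip_seq (Suc n)} \<subseteq> {2 ^ ?k, 2 ^ Suc ?k - 1, 2 ^ Suc ?k}"
  proof
    fix n assume "n \<in> {n \<in> {m..2*m}. dip_seq n \<noteq> dip_seq (Suc n)}"
    then have n: "m \<le> n" "n \<le> 2 * m" and jump: "dip_seq n \<noteq> dip_seq (Suc n)"
      by auto
    have lower: "2 ^ ?k \<le> n" and upper: "Suc n < 2 ^ Suc (Suc ?k)"
      using n m_lower m_upper by auto
    then have lower': "2 ^ ?k < Suc n" and upper': "n < 2 ^ Suc (Suc ?k)"
      by simp_all
    from jump obtain j where "n = 2 ^ j \<or> Suc n = 2 ^ j"
      using dip_seq_Suc_eq by metis
    then show "n \<in> {2 ^ ?k, 2 ^ Suc ?k - 1, 2 ^ Suc ?k}"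
    proof
      assume "n = 2 ^ j"
      then have "?k \<le> j" "j < Suc (Suc ?k)"
        using lower upper' by (simp_all del: power_Suc)
      then have "j = ?k \<or> j = Suc ?k" by linarith
      then show ?thesis using \<open>n = 2 ^ j\<close> by auto
    next
      assume "Suc n = 2 ^ j"
      then have "?k < j" "j < Suc (Suc ?k)"
        using lower' upper by (simp_all del: power_Suc)
      then have "j = Suc ?k" by linarith
      then show ?thesis using \<open>Suc n = 2 ^ j\<close> by auto
    qed
  qed
  then have "card {n \<in> {m..2*m}. dip_seq n \<noteq> dip_seq (Suc n)}
      \<le> card {2 ^ ?k, 2 ^ Suc ?k - 1, 2 ^ Suc ?k :: nat}"
    by (rule card_mono[rotated]) simp
  also have "\<dots> \<le> 3"
    by (simp add: card_insert_le_m1)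
  finally show ?thesis .
qed

lemma dip_seq_superblock_variation:
  "real (2 ^ i - 1) * dip_seq (2 ^ 2 ^ i)
     \<le> (\<Sum>n = 2 ^ 2 ^ i..<2 ^ 2 ^ Suc i. \<bar>dip_seq n - dip_seq (Suc n)\<bar>)"
proof -
  let ?W = "dyadic_level (2 ^ i)"
  let ?v = "\<lambda>n. \<bar>dip_seq n - dip_seq (Suc n)\<bar>"
  let ?I = "{2 ^ i..<2 * 2 ^ i - 1} :: nat set"
  let ?dip = "\<lambda>L. 2 ^ Suc L - 1 :: nat"
  have jump: "?v (?dip L) = ?W / 2" if "L \<in> ?I" for L
  proof -
    have "dip_seq (?dip L) = ?W"
      using that dip_seq_power2_minus_1[of L] dyadic_level_eq[of i L] by auto
    moreover have "dip_seq (Suc (?dip L)) = ?W / 2"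
      using that dip_seq_power2[of "Suc L"] dyadic_level_eq[of i "Suc L"] by auto
    ultimately show ?thesis
      using dyadic_level_pos[of "2 ^ i"] by simp
  qed
  have "inj_on ?dip ?I"
  proof (rule inj_onI)
    fix x y assume "?dip x = ?dip y"
    then have "(2::nat) ^ Suc x = 2 ^ Suc y"
      using one_le_power[of "2::nat" "Suc x"] one_le_power[of "2::nat" "Suc y"] by linarith
    then show "x = y"
      by (simp del: power_Suc)
  qed
  moreover have "?dip ` ?I \<subseteq> {2 ^ 2 ^ i..<2 ^ 2 ^ Suc i}"
  proof
    fix n assume "n \<in> ?dip ` ?I"
    then obtain L where L: "2 ^ i \<le> L" "Suc L < 2 * 2 ^ i" and n: "n = 2 ^ Suc L - 1"
      by auto
    have "(2::nat) ^ 2 ^ i < 2 ^ Suc (2 ^ i)"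
      by (rule power_strict_increasing) auto
    moreover have "(2::nat) ^ Suc (2 ^ i) \<le> 2 ^ Suc L"
      using L by (intro power_increasing) auto
    moreover have "(2::nat) ^ Suc L \<le> 2 ^ 2 ^ Suc i"
      using L by (intro power_increasing) auto
    ultimately show "n \<in> {2 ^ 2 ^ i..<2 ^ 2 ^ Suc i}"
      unfolding n atLeastLessThan_iff using one_le_power[of "2::nat" "Suc L"] by linarith
  qed
  ultimately have sum_le: "(\<Sum>L\<in>?I. ?v (?dip L)) \<le> (\<Sum>n = 2 ^ 2 ^ i..<2 ^ 2 ^ Suc i. ?v n)"
    by (subst sum.reindex[symmetric, unfolded comp_def]) (auto intro: sum_mono2)
  have "real (2 ^ i - 1) * dip_seq (2 ^ 2 ^ i) = (\<Sum>L\<in>?I. ?W / 2)"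
    using dip_seq_power2[of "2 ^ i"] by simp
  also have "\<dots> = (\<Sum>L\<in>?I. ?v (?dip L))"
    by (rule sum.cong[OF refl jump, symmetric])
  finally show ?thesis
    using sum_le by linarith
qed

lemma GBV_dip_seq: "GBV dip_seq"
proof (rule GBV_if_few_jumps[where K = 3 and A = 2])
  show "dip_seq \<longlonglongrightarrow> 0"
  proof (rule tendsto_sandwich[of "\<lambda>_. 0" _ _ "\<lambda>n. 2 / real n"])
    show "\<forall>\<^sub>F n in sequentially. dip_seq n \<le> 2 / real n"
      unfolding eventually_sequentially by (blast intro: dip_seq_le_const_over_n)
  qed (simp_all add: less_imp_le[OF dip_seq_pos] lim_const_over_n)
  show "card {n \<in> {m..2*m}. dip_seq n \<noteq> dip_seq (Suc n)} \<le> 3" if "1 \<le> m" for m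
    using that by (rule dip_seq_jumps_card)
qed (auto intro: less_imp_le[OF dip_seq_pos] dip_seq_quasi_antimono)

lemma not_R0BV_dip_seq: "\<not> R0BV dip_seq"
proof (rule not_R0BV_if_unbounded_variation)
  fix B :: real
  obtain i :: nat where "B < real i"
    using reals_Archimedean2 by blast
  moreover have "real i \<le> real (2 ^ i - 1)"
    by (intro of_nat_mono) (use less_exp[of i] in linarith)
  ultimately have "B * dip_seq (2 ^ 2 ^ i) \<le> real (2 ^ i - 1) * dip_seq (2 ^ 2 ^ i)"
    using less_imp_le[OF dip_seq_pos] by (intro mult_right_mono) auto
  also have "\<dots> \<le> (\<Sum>n = 2 ^ 2 ^ i..<2 ^ 2 ^ Suc i. \<bar>dip_seq n - dip_seq (Suc n)\<bar>)"
    by (rule dip_seq_superblock_variation)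
  finally show "\<exists>m N. 1 \<le> m \<and> 0 < dip_seq m \<and>
      B * dip_seq m \<le> (\<Sum>n = m..<N. \<bar>dip_seq n - dip_seq (Suc n)\<bar>)"
    using dip_seq_pos by (intro exI[of _ "2 ^ 2 ^ i"] exI[of _ "2 ^ 2 ^ Suc i"]) simp
qed

theorem theorem3:
  shows "\<exists>lam::nat \<Rightarrow> real. (\<forall>n\<ge>1. lam n \<ge> 0) \<and> GBV lam \<and> \<not> R0BV lam \<and>
    (\<forall>p \<gamma>::real. 1 < p \<longrightarrow> 1/p - 1 < \<gamma> \<longrightarrow> \<gamma> < 1/p \<longrightarrow>
       summable (\<lambda>n. real (Suc n) powr (p + p*\<gamma> - 2) * lam (Suc n) powr p))"
proof (intro exI[of _ dip_seq] conjI allI impI GBV_dip_seq not_R0BV_dip_seq)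
  show "0 \<le> dip_seq n" for n
    using dip_seq_pos less_imp_le by blast
  fix p \<gamma> :: real
  assume p: "1 < p" and "1/p - 1 < \<gamma>" "\<gamma> < 1/p"
  then have "p * \<gamma> < 1"
    by (simp add: field_simps)
  then show "summable (\<lambda>n. real (Suc n) powr (p + p*\<gamma> - 2) * dip_seq (Suc n) powr p)"
    using p dip_seq_pos less_imp_le
    by (intro summable_weighted_powr_if_le_const_over_n[where C = 2] dip_seq_le_const_over_n) auto
qed

end
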